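(* Let $n\ge1$ and let $\mathcal{L}$ be the vertex labeling of the linear representation of some linked cycle on $[n]$. Let $LC_n(\mathcal{L})$ be the set of linked cycles on $[n]$ whose linear representation has vertex labeling $\mathcal{L}$. Call the vertices of $\mathcal{L}$ labeled $i^{(j)}$ with $j\ge1$ that are not isolated points left endpoints, and the vertices labeled $i^{(0)}$ right endpoints. For a left endpoint $v$ let $h(v)$ be the number of right endpoints to the right of $v$ minus the number of left endpoints to the right of $v$. Then $$\sum_{\hat\pi\in LC_n(\mathcal{L})}x^{cr_2(\hat\pi)}y^{ne_2(\hat\pi)}=\sum_{\hat\pi\in LC_n(\mathcal{L})}x^{ne_2(\hat\pi)}y^{cr_2(\hat\pi)}=\prod_{v}\left(x^{h(v)-1}+x^{h(v)-2}y+\cdots+xy^{h(v)-2}+y^{h(v)-1}\right),$$ the product being over all left endpoints $v$ of $\mathcal{L}$. In particular $cr_2$ and $ne_2$ have a symmetric joint distribution over $LC_n(\mathcal{L})$.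
   Context: Two finite sets of integers $E,F$ are nearly disjoint if for every $i\in E\cap F$ either ($i=\min(E)$, $|E|>1$, $i\ne\min(F)$) or ($i=\min(F)$, $|F|>1$, $i\ne\min(E)$). A linked partition of $[n]$ is a set of nonempty subsets (blocks) of $[n]$ with union $[n]$, any two distinct blocks nearly disjoint; each element lies in one or two blocks (singly/doubly covered). A linked cycle on $[n]$ is a linked partition of $[n]$ with a cyclic arrangement of each block; a cycle is written $(i_1i_2\dots i_t)$ with $i_1$ its minimum. Linear representation of a linked cycle $\hat\pi$: for each $i\in[n]$ create vertices: if $i$ is singly covered and the minimum of its cycle, of size $k+1$, create $i^{(1)},\dots,i^{(k)}$ if $k\ge1$, and a single isolated vertex $i^{(1)}$ if $k=0$; if $i$ is singly covered and not the minimum of its cycle, create $i^{(0)}$; if $i$ is doubly covered and the minimum of a cycle of size $k+1$, create $i^{(0)},i^{(1)},\dots,i^{(k)}$. Vertices lie on a line ordered by $i$, then by superscript. For each cycle $(i_1\dots i_t)$, $t\ge2$, draw arcs $(i_1^{(j)},i_{t+1-j}^{(0)})$, $j=1,\dots,t-1$. The vertex labeling is the left-to-right sequence of vertex labels. Two arcs $(x_1,y_1),(x_2,y_2)$ form a 2-crossing if the vertices appear in the order $x_1,x_2,y_1,y_2$, and a 2-nesting if in the order $x_1,x_2,y_2,y_1$; $cr_2(\hat\pi)$, $ne_2(\hat\pi)$ are the numbers of these. *)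

theory Defs
  imports Main "HOL-Library.Product_Lexorder"
begin

definition nearly_disjoint :: "nat set \<Rightarrow> nat set \<Rightarrow> bool" where
  "nearly_disjoint E F \<longleftrightarrow>
     (\<forall>i \<in> E \<inter> F.
        (i = Min E \<and> card E > 1 \<and> i \<noteq> Min F) \<or>
        (i = Min F \<and> card F > 1 \<and> i \<noteq> Min E))"

definition linked_partition :: "nat \<Rightarrow> nat set set \<Rightarrow> bool" where
  "linked_partition n P \<longleftrightarrow>
     (\<forall>B \<in> P. B \<noteq> {} \<and> B \<subseteq> {1..n}) \<and> \<Union>P = {1..n} \<and>
     (\<forall>E \<in> P. \<forall>F \<in> P. E \<noteq> F \<longrightarrow> nearly_disjoint E F)"

text \<open>A cycle (i_1 i_2 ... i_t) is represented by the list [i_1, ..., i_t] of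
  distinct elements, written starting with its minimum i_1.\<close>
definition is_cycle :: "nat list \<Rightarrow> bool" where
  "is_cycle c \<longleftrightarrow> c \<noteq> [] \<and> distinct c \<and> hd c = Min (set c)"

definition linked_cycle :: "nat \<Rightarrow> nat list set \<Rightarrow> bool" where
  "linked_cycle n C \<longleftrightarrow>
     (\<forall>c \<in> C. is_cycle c) \<and> inj_on set C \<and> linked_partition n (set ` C)"

text \<open>Linear representation.  Vertex i^(j) is the pair (i, j); vertices are ordered
  by i, then by the superscript j (lexicographic order on pairs).\<close>
definition cycles_containing :: "nat list set \<Rightarrow> nat \<Rightarrow> nat list set" where
  "cycles_containing C i = {c \<in> C. i \<in> set c}"

definition singly_covered :: "nat list set \<Rightarrow> nat \<Rightarrow> bool" where
  "singly_covered C i \<longleftrightarrow> card (cycles_containing C i) = 1"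

definition doubly_covered :: "nat list set \<Rightarrow> nat \<Rightarrow> bool" where
  "doubly_covered C i \<longleftrightarrow> card (cycles_containing C i) = 2"

definition is_cycle_min :: "nat list set \<Rightarrow> nat \<Rightarrow> bool" where
  "is_cycle_min C i \<longleftrightarrow> (\<exists>c \<in> C. hd c = i)"

text \<open>The cycle whose minimum is i (unique in a linked cycle).\<close>
definition min_cycle :: "nat list set \<Rightarrow> nat \<Rightarrow> nat list" where
  "min_cycle C i = (THE c. c \<in> C \<and> hd c = i)"

definition verts_of :: "nat list set \<Rightarrow> nat \<Rightarrow> (nat \<times> nat) set" where
  "verts_of C i =
     (let k = length (min_cycle C i) - 1 in
      if singly_covered C i \<and> is_cycle_min C i then
        (if k \<ge> 1 then {(i, j) | j. 1 \<le> j \<and> j \<le> k} else {(i, 1)})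
      else if singly_covered C i \<and> \<not> is_cycle_min C i then {(i, 0)}
      else if doubly_covered C i \<and> is_cycle_min C i then {(i, j) | j. j \<le> k}
      else {})"

definition lin_vertices :: "nat \<Rightarrow> nat list set \<Rightarrow> (nat \<times> nat) set" where
  "lin_vertices n C = (\<Union>i \<in> {1..n}. verts_of C i)"

definition isolated_vertices :: "nat list set \<Rightarrow> (nat \<times> nat) set" where
  "isolated_vertices C = {(hd c, 1) | c. c \<in> C \<and> length c = 1}"

text \<open>Arcs: for each cycle (i_1 ... i_t), t \<ge> 2, the arcs (i_1^(j), i_(t+1-j)^(0)),
  j = 1..t-1.  With 0-based list indexing, i_(t+1-j) = c ! (t - j).\<close>
definition lin_arcs :: "nat list set \<Rightarrow> ((nat \<times> nat) \<times> (nat \<times> nat)) set" where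
  "lin_arcs C = {((hd c, j), (c ! (length c - j), 0)) | c j.
                   c \<in> C \<and> 2 \<le> length c \<and> 1 \<le> j \<and> j \<le> length c - 1}"

definition cr2 :: "nat list set \<Rightarrow> nat" where
  "cr2 C = card {(a, b). a \<in> lin_arcs C \<and> b \<in> lin_arcs C \<and>
                         fst a < fst b \<and> fst b < snd a \<and> snd a < snd b}"

definition ne2 :: "nat list set \<Rightarrow> nat" where
  "ne2 C = card {(a, b). a \<in> lin_arcs C \<and> b \<in> lin_arcs C \<and>
                         fst a < fst b \<and> fst b < snd b \<and> snd b < snd a}"

text \<open>Vertex labeling: the left-to-right sequence of vertex labels.  Each label
  (i, j, iso) records the vertex i^(j) and whether it is drawn as an isolated point.\<close>
definition vertex_labeling :: "nat \<Rightarrow> nat list set \<Rightarrow> (nat \<times> nat \<times> bool) list" where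
  "vertex_labeling n C =
     map (\<lambda>v. (fst v, snd v, v \<in> isolated_vertices C)) (sorted_list_of_set (lin_vertices n C))"

definition LC :: "nat \<Rightarrow> (nat \<times> nat \<times> bool) list \<Rightarrow> nat list set set" where
  "LC n L = {C. linked_cycle n C \<and> vertex_labeling n C = L}"

definition is_left_end :: "(nat \<times> nat \<times> bool) \<Rightarrow> bool" where
  "is_left_end l \<longleftrightarrow> fst (snd l) \<ge> 1 \<and> \<not> snd (snd l)"

definition is_right_end :: "(nat \<times> nat \<times> bool) \<Rightarrow> bool" where
  "is_right_end l \<longleftrightarrow> fst (snd l) = 0"

definition hval :: "(nat \<times> nat \<times> bool) list \<Rightarrow> nat \<Rightarrow> int" where
  "hval L p = int (card {q. p < q \<and> q < length L \<and> is_right_end (L ! q)})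
            - int (card {q. p < q \<and> q < length L \<and> is_left_end (L ! q)})"

definition hpoly :: "int \<Rightarrow> 'a::comm_ring_1 \<Rightarrow> 'a \<Rightarrow> 'a" where
  "hpoly h x y = (\<Sum>k \<in> {0..h - 1}. x ^ nat (h - 1 - k) * y ^ nat k)"

end

theory Submission
  imports Defs
begin

(* The arcs of a linked cycle join every left endpoint to a right endpoint further right, and
   every right endpoint is reached exactly once: the arc set is a perfect matching of the left
   endpoints with the right endpoints in which every arc points to the right.  The vertex
   labeling fixes the cycle minima and the cycle lengths, and a cycle is recovered from its
   minimum, its length and the arcs leaving its minimum.  So the linked cycles with labeling L
   correspond, via their arcs, to all such matchings of the endpoints of L.  In a matching,
   the partner of the rightmost left endpoint b is one of the h(b) right endpoints after b;
   all other arcs start before b, so an arc to the r-th of them crosses r - 1 arcs and is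
   nested in h(b) - r arcs, while removing it leaves the heights of the other left endpoints
   unchanged.  By induction the generating function is the product of the factors
   x^(h-1) + x^(h-2) y + ... + y^(h-1), which are symmetric in x and y. *)

section \<open>The factors hpoly\<close>

lemma hpoly_of_nat: "hpoly (int h) x y = (\<Sum>k<h. x ^ (h - 1 - k) * y ^ k)"
proof -
  have "{0..int h - 1} = int ` {..<h}"
    by (auto simp: image_iff intro!: bexI[of _ "nat _"])
  then show ?thesis
    unfolding hpoly_def by (simp add: sum.reindex nat_diff_distrib)
qed

lemma hpoly_commute: "hpoly h x y = hpoly h y x"
proof (cases "h \<le> 0")
  case True
  then show ?thesis unfolding hpoly_def by simp
next
  case False
  then obtain m where m: "h = int m" by (metis nat_0_le not_le order_less_imp_le)
  have "(\<Sum>k<m. x ^ (m - 1 - k) * y ^ k) = (\<Sum>k<m. x ^ (m - 1 - (m - Suc k)) * y ^ (m - Suc k))"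
    by (rule sum.nat_diff_reindex[symmetric])
  also have "\<dots> = (\<Sum>k<m. y ^ (m - 1 - k) * x ^ k)"
    by (intro sum.cong) (auto simp: mult.commute)
  finally show ?thesis unfolding m hpoly_of_nat .
qed

lemma sum_rank_powers:
  fixes W :: "'v::linorder set"
  assumes "finite W"
  shows "(\<Sum>w\<in>W. x ^ card {z\<in>W. z < w} * y ^ card {z\<in>W. w < z}) = hpoly (int (card W)) x y"
  using assms
proof (induction W rule: finite_linorder_max_induct)
  case empty
  then show ?case by (simp add: hpoly_def)
next
  case (insert b A)
  have bA: "b \<notin> A" using insert by auto
  have below: "{z\<in>insert b A. z < b} = A" and above: "{z\<in>insert b A. b < z} = {}"
    using insert by auto
  have "(\<Sum>w\<in>insert b A. x ^ card {z\<in>insert b A. z < w} * y ^ card {z\<in>insert b A. w < z})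
     = x ^ card A + (\<Sum>w\<in>A. x ^ card {z\<in>insert b A. z < w} * y ^ card {z\<in>insert b A. w < z})"
    using insert.hyps(1) bA
    by (subst sum.insert)
      (simp_all only: below above card.empty power_0 mult_1_right not_False_eq_True)
  also have "(\<Sum>w\<in>A. x ^ card {z\<in>insert b A. z < w} * y ^ card {z\<in>insert b A. w < z})
     = (\<Sum>w\<in>A. y * (x ^ card {z\<in>A. z < w} * y ^ card {z\<in>A. w < z}))"
  proof (rule sum.cong[OF refl])
    fix w assume w: "w \<in> A"
    have "{z\<in>insert b A. z < w} = {z\<in>A. z < w}" "{z\<in>insert b A. w < z} = insert b {z\<in>A. w < z}"
      using w insert by auto
    then show "x ^ card {z\<in>insert b A. z < w} * y ^ card {z\<in>insert b A. w < z}
        = y * (x ^ card {z\<in>A. z < w} * y ^ card {z\<in>A. w < z})"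
      using insert.hyps(1) bA by (simp add: mult_ac)
  qed
  also have "(\<Sum>w\<in>A. y * (x ^ card {z\<in>A. z < w} * y ^ card {z\<in>A. w < z}))
      = y * hpoly (int (card A)) x y"
    by (simp only: sum_distrib_left[symmetric] insert.IH)
  also have "x ^ card A + y * hpoly (int (card A)) x y = hpoly (int (card (insert b A))) x y"
    using insert.hyps(1) bA unfolding hpoly_of_nat
    by (simp add: sum.lessThan_Suc_shift sum_distrib_left mult_ac del: sum.lessThan_Suc)
  finally show ?case .
qed

section \<open>Matchings by rightward arcs\<close>

definition arc_matchings :: "'v::linorder set \<Rightarrow> 'v set \<Rightarrow> ('v \<times> 'v) set set" where
  "arc_matchings A B = {M. M \<subseteq> A \<times> B \<and> (\<forall>a\<in>M. fst a < snd a) \<and>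
      (\<forall>l\<in>A. \<exists>!r. (l, r) \<in> M) \<and> (\<forall>r\<in>B. \<exists>!l. (l, r) \<in> M)}"

definition crossings :: "('v::linorder \<times> 'v) set \<Rightarrow> nat" where
  "crossings M = card {(a, b). a \<in> M \<and> b \<in> M \<and> fst a < fst b \<and> fst b < snd a \<and> snd a < snd b}"

definition nestings :: "('v::linorder \<times> 'v) set \<Rightarrow> nat" where
  "nestings M = card {(a, b). a \<in> M \<and> b \<in> M \<and> fst a < fst b \<and> fst b < snd b \<and> snd b < snd a}"

lemma cr2_eq_crossings: "cr2 C = crossings (lin_arcs C)"
  unfolding cr2_def crossings_def ..

lemma ne2_eq_nestings: "ne2 C = nestings (lin_arcs C)"
  unfolding ne2_def nestings_def ..

definition height :: "'v::linorder set \<Rightarrow> 'v set \<Rightarrow> 'v \<Rightarrow> int" where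
  "height A B v = int (card {r\<in>B. v < r}) - int (card {l\<in>A. v < l})"

definition partner :: "('v \<times> 'v) set \<Rightarrow> 'v \<Rightarrow> 'v" where
  "partner M l = (THE r. (l, r) \<in> M)"

context
  fixes M :: "('v::linorder \<times> 'v) set" and A B :: "'v set"
  assumes matching: "M \<in> arc_matchings A B"
begin

lemma arc_matching_subset: "M \<subseteq> A \<times> B"
  using matching unfolding arc_matchings_def by blast

lemma arc_matching_less: "(l, r) \<in> M \<Longrightarrow> l < r"
  using matching unfolding arc_matchings_def by fastforce

lemma partner_eqI:
  assumes "(l, r) \<in> M"
  shows "partner M l = r"
proof -
  have "l \<in> A" using assms arc_matching_subset by blast
  then have "\<exists>!r. (l, r) \<in> M" using matching unfolding arc_matchings_def by blast
  then show ?thesis unfolding partner_def using assms by (rule the1_equality)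
qed

lemma partner_mem:
  assumes "l \<in> A"
  shows "(l, partner M l) \<in> M"
proof -
  obtain r where "(l, r) \<in> M" using assms matching unfolding arc_matchings_def by blast
  then show ?thesis using partner_eqI by simp
qed

lemma arc_matching_eq_graph: "M = (\<lambda>l. (l, partner M l)) ` A"
  using arc_matching_subset partner_mem partner_eqI by fastforce

lemma arc_matching_left_unique: "(l, r) \<in> M \<Longrightarrow> (l', r) \<in> M \<Longrightarrow> l = l'"
proof -
  assume arcs: "(l, r) \<in> M" "(l', r) \<in> M"
  then have "r \<in> B" using arc_matching_subset by blast
  then have "\<exists>!l. (l, r) \<in> M" using matching unfolding arc_matchings_def by blast
  then show "l = l'" using arcs by blast
qed

lemma bij_betw_partner: "bij_betw (partner M) A B"
proof (rule bij_betw_imageI)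
  show "inj_on (partner M) A"
    by (rule inj_onI) (metis partner_mem arc_matching_left_unique)
  show "partner M ` A = B"
  proof
    show "partner M ` A \<subseteq> B" using partner_mem arc_matching_subset by blast
    show "B \<subseteq> partner M ` A"
    proof
      fix r assume "r \<in> B"
      then obtain l where "(l, r) \<in> M" using matching unfolding arc_matchings_def by blast
      then show "r \<in> partner M ` A" using arc_matching_subset partner_eqI by force
    qed
  qed
qed

lemma card_arcs_right_end_filter: "card {a\<in>M. P (snd a)} = card {r\<in>B. P r}"
proof -
  have "inj_on snd M"
    by (rule inj_onI) (metis arc_matching_left_unique prod.collapse)
  then have inj: "inj_on snd {a\<in>M. P (snd a)}" by (rule inj_on_subset) blast
  have "snd ` M = B"
    using bij_betw_partner by (subst arc_matching_eq_graph) (simp add: bij_betw_def image_image)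
  then have img: "snd ` {a\<in>M. P (snd a)} = {r\<in>B. P r}" by blast
  show ?thesis using card_image[OF inj] unfolding img by (rule sym)
qed

end

lemma arc_matchings_finite: "finite A \<Longrightarrow> finite B \<Longrightarrow> finite (arc_matchings A B)"
  by (rule finite_subset[of _ "Pow (A \<times> B)"]) (auto simp: arc_matchings_def)

lemma arc_matchings_card_eq: "M \<in> arc_matchings A B \<Longrightarrow> card A = card B"
  using bij_betw_partner bij_betw_same_card by blast

lemma arc_matching_finite: "M \<in> arc_matchings A B \<Longrightarrow> finite A \<Longrightarrow> finite M"
  by (subst arc_matching_eq_graph) auto

lemma arc_matchings_remove_arc:
  assumes M: "M \<in> arc_matchings (insert b A) B" and bw: "(b, w) \<in> M" and b: "b \<notin> A"
  shows "M - {(b, w)} \<in> arc_matchings A (B - {w})"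
proof -
  have "(l, r) \<in> M \<Longrightarrow> l \<noteq> b \<longleftrightarrow> r \<noteq> w" for l r
    using bw partner_eqI[OF M] arc_matching_left_unique[OF M] by metis
  then show ?thesis
    using M arc_matching_subset[OF M] b unfolding arc_matchings_def by auto
qed

lemma arc_matchings_insert_arc:
  assumes M': "M' \<in> arc_matchings A (B - {w})" and b: "b \<notin> A" and w: "w \<in> B" "b < w"
  shows "insert (b, w) M' \<in> arc_matchings (insert b A) B"
  using M' arc_matching_subset[OF M'] b w unfolding arc_matchings_def by auto blast+

lemma arc_matchings_insert_max:
  assumes max: "\<forall>a\<in>A. a < b"
  shows "arc_matchings (insert b A) B =
     (\<lambda>(w, M'). insert (b, w) M') ` (SIGMA w:{w\<in>B. b < w}. arc_matchings A (B - {w}))"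
proof -
  have b: "b \<notin> A" using max by blast
  have "M \<in> (\<lambda>(w, M'). insert (b, w) M') ` (SIGMA w:{w\<in>B. b < w}. arc_matchings A (B - {w}))"
    if M: "M \<in> arc_matchings (insert b A) B" for M
  proof -
    let ?w = "partner M b"
    have bw: "(b, ?w) \<in> M" using partner_mem[OF M] by blast
    then have "?w \<in> B" "b < ?w"
      using arc_matching_subset[OF M] arc_matching_less[OF M] by blast+
    moreover have "M = insert (b, ?w) (M - {(b, ?w)})" using bw by blast
    ultimately show ?thesis
      using arc_matchings_remove_arc[OF M bw b]
      by (auto intro!: image_eqI[of _ _ "(?w, M - {(b, ?w)})"])
  qed
  then show ?thesis using arc_matchings_insert_arc[OF _ b] by auto
qed

lemma inj_on_insert_max_arc:
  assumes max: "\<forall>a\<in>A. a < b"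
  shows "inj_on (\<lambda>(w, M'). insert (b, w) M') (SIGMA w:{w\<in>B. b < w}. arc_matchings A (B - {w}))"
proof (rule inj_onI, clarify)
  fix w M1 w' M2
  assume M1: "M1 \<in> arc_matchings A (B - {w})" and M2: "M2 \<in> arc_matchings A (B - {w'})"
    and eq: "insert (b, w) M1 = insert (b, w') M2"
  have notin: "(b, r) \<notin> M1" "(b, r) \<notin> M2" for r
    using arc_matching_subset[OF M1] arc_matching_subset[OF M2] max by blast+
  have "(b, w') \<in> insert (b, w) M1" using eq by blast
  then have "w = w'" using notin by blast
  have "M1 = insert (b, w) M1 - {(b, w)}" using notin by blast
  also have "\<dots> = M2" using eq \<open>w = w'\<close> notin by blast
  finally show "w = w' \<and> M1 = M2" using \<open>w = w'\<close> by blast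
qed

lemma crossings_insert_max_arc:
  assumes "finite M" and "\<forall>a\<in>M. fst a < v" and "(v, w) \<notin> M"
  shows "crossings (insert (v, w) M) = crossings M + card {a\<in>M. v < snd a \<and> snd a < w}"
proof -
  let ?S = "\<lambda>M. {(a, b). a \<in> M \<and> b \<in> M \<and> fst a < fst b \<and> fst b < snd a \<and> snd a < snd b}"
  let ?new = "(\<lambda>a. (a, (v, w))) ` {a\<in>M. v < snd a \<and> snd a < w}"
  have "?S (insert (v, w) M) = ?S M \<union> ?new" using assms(2) by (auto simp: image_iff)
  moreover have "finite (?S M)" by (rule finite_subset[of _ "M \<times> M"]) (use assms(1) in auto)
  moreover have "?S M \<inter> ?new = {}" using assms(3) by auto
  moreover have "card ?new = card {a\<in>M. v < snd a \<and> snd a < w}"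
    by (rule card_image) (auto simp: inj_on_def)
  ultimately show ?thesis unfolding crossings_def using assms(1) by (simp add: card_Un_disjoint)
qed

lemma nestings_insert_max_arc:
  assumes "finite M" and "\<forall>a\<in>M. fst a < v" and "(v, w) \<notin> M" and "v < w"
  shows "nestings (insert (v, w) M) = nestings M + card {a\<in>M. w < snd a}"
proof -
  let ?S = "\<lambda>M. {(a, b). a \<in> M \<and> b \<in> M \<and> fst a < fst b \<and> fst b < snd b \<and> snd b < snd a}"
  let ?new = "(\<lambda>a. (a, (v, w))) ` {a\<in>M. w < snd a}"
  have "?S (insert (v, w) M) = ?S M \<union> ?new" using assms(2,4) by (auto simp: image_iff)
  moreover have "finite (?S M)" by (rule finite_subset[of _ "M \<times> M"]) (use assms(1) in auto)
  moreover have "?S M \<inter> ?new = {}" using assms(3) by auto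
  moreover have "card ?new = card {a\<in>M. w < snd a}" by (rule card_image) (auto simp: inj_on_def)
  ultimately show ?thesis unfolding nestings_def using assms(1) by (simp add: card_Un_disjoint)
qed

lemma graph_in_arc_matchings:
  assumes "bij_betw f A B" and "\<forall>v\<in>A. v < f v"
  shows "(\<lambda>v. (v, f v)) ` A \<in> arc_matchings A B"
  using assms unfolding arc_matchings_def bij_betw_def inj_on_def by auto

lemma arc_counts_insert_max_arc:
  assumes M': "M' \<in> arc_matchings A (B - {w})" and max: "\<forall>a\<in>A. a < b"
    and "finite A" and "b < w"
  shows "crossings (insert (b, w) M') = crossings M' + card {z\<in>B. b < z \<and> z < w}"
    and "nestings (insert (b, w) M') = nestings M' + card {z\<in>B. w < z}"
proof -
  have fin: "finite M'" using arc_matching_finite[OF M'] \<open>finite A\<close> .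
  have lt: "\<forall>a\<in>M'. fst a < b" using arc_matching_subset[OF M'] max by auto
  then have notin: "(b, w) \<notin> M'" by auto
  have "card {a\<in>M'. b < snd a \<and> snd a < w} = card {z\<in>B - {w}. b < z \<and> z < w}"
    by (rule card_arcs_right_end_filter[OF M'])
  also have "{z\<in>B - {w}. b < z \<and> z < w} = {z\<in>B. b < z \<and> z < w}" by auto
  finally show "crossings (insert (b, w) M') = crossings M' + card {z\<in>B. b < z \<and> z < w}"
    using crossings_insert_max_arc[OF fin lt notin] by simp
  have "card {a\<in>M'. w < snd a} = card {z\<in>B - {w}. w < z}"
    by (rule card_arcs_right_end_filter[OF M'])
  also have "{z\<in>B - {w}. w < z} = {z\<in>B. w < z}" by auto
  finally show "nestings (insert (b, w) M') = nestings M' + card {z\<in>B. w < z}"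
    using nestings_insert_max_arc[OF fin lt notin \<open>b < w\<close>] by simp
qed

lemma height_insert_max:
  assumes "finite A" "finite B" "b \<notin> A" "v < b" "w \<in> B" "v < w"
  shows "height (insert b A) B v = height A (B - {w}) v"
proof -
  have "{r\<in>B. v < r} = insert w {r\<in>B - {w}. v < r}" "{l\<in>insert b A. v < l} = insert b {l\<in>A. v < l}"
    using assms by auto
  then show ?thesis unfolding height_def using assms by simp
qed

lemma sum_weights_insert_max_arc:
  fixes x y :: "'a::comm_semiring_1"
  assumes "\<forall>a\<in>A. a < b" "finite A" "b < w"
  shows "(\<Sum>M\<in>arc_matchings A (B - {w}).
        x ^ crossings (insert (b, w) M) * y ^ nestings (insert (b, w) M))
    = x ^ card {z\<in>B. b < z \<and> z < w} * y ^ card {z\<in>B. w < z} *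
      (\<Sum>M\<in>arc_matchings A (B - {w}). x ^ crossings M * y ^ nestings M)"
proof -
  have "x ^ crossings (insert (b, w) M) * y ^ nestings (insert (b, w) M)
      = x ^ card {z\<in>B. b < z \<and> z < w} * y ^ card {z\<in>B. w < z} * (x ^ crossings M * y ^ nestings M)"
    if "M \<in> arc_matchings A (B - {w})" for M
    using arc_counts_insert_max_arc[OF that assms] by (simp add: power_add mult_ac)
  then show ?thesis by (simp add: sum_distrib_left)
qed

theorem arc_matchings_generating_function:
  fixes A B :: "'v::linorder set" and x y :: "'a::comm_ring_1"
  assumes "finite A" "finite B" "card A = card B"
  shows "(\<Sum>M\<in>arc_matchings A B. x ^ crossings M * y ^ nestings M)
    = (\<Prod>v\<in>A. hpoly (height A B v) x y)"
  using assms
proof (induction A arbitrary: B rule: finite_linorder_max_induct)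
  case empty
  then have "arc_matchings {} B = {{}}" by (auto simp: arc_matchings_def)
  then show ?case by (simp add: crossings_def nestings_def)
next
  case (insert b A)
  have b: "b \<notin> A" using insert.hyps(2) by blast
  define W where "W = {w\<in>B. b < w}"
  define g where "g M = x ^ crossings M * y ^ nestings M" for M :: "('v \<times> 'v) set"
  define rank where "rank w = x ^ card {z\<in>W. z < w} * y ^ card {z\<in>W. w < z}" for w
  define P where "P = (\<Prod>v\<in>A. hpoly (height (insert b A) B v) x y)"
  have "(\<Sum>M\<in>arc_matchings (insert b A) B. g M)
      = (\<Sum>(w, M)\<in>(SIGMA w:W. arc_matchings A (B - {w})). g (insert (b, w) M))"
    unfolding arc_matchings_insert_max[OF insert.hyps(2)] W_def
    by (subst sum.reindex[OF inj_on_insert_max_arc[OF insert.hyps(2)]]) (simp add: case_prod_unfold)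
  also have "\<dots> = (\<Sum>w\<in>W. \<Sum>M\<in>arc_matchings A (B - {w}). g (insert (b, w) M))"
    using insert.prems(1) insert.hyps(1)
    by (subst sum.Sigma) (auto simp: W_def arc_matchings_finite)
  also have "\<dots> = (\<Sum>w\<in>W. rank w * P)"
  proof (rule sum.cong[OF refl])
    fix w assume w: "w \<in> W"
    have below: "{z\<in>W. z < w} = {z\<in>B. b < z \<and> z < w}" and above: "{z\<in>W. w < z} = {z\<in>B. w < z}"
      using w by (auto simp: W_def)
    have "(\<Sum>M\<in>arc_matchings A (B - {w}). g (insert (b, w) M))
        = rank w * (\<Sum>M\<in>arc_matchings A (B - {w}). g M)"
      unfolding g_def rank_def below above
      by (rule sum_weights_insert_max_arc[OF insert.hyps(2,1)]) (use w in \<open>simp add: W_def\<close>)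
    also have "\<dots> = rank w * (\<Prod>v\<in>A. hpoly (height A (B - {w}) v) x y)"
      using insert.IH[of "B - {w}"] insert.prems insert.hyps(1) b w by (simp add: W_def g_def)
    also have "(\<Prod>v\<in>A. hpoly (height A (B - {w}) v) x y) = P"
      unfolding P_def using height_insert_max[OF insert.hyps(1) insert.prems(1) b] insert.hyps(2) w
      by (intro prod.cong) (auto simp: W_def)
    finally show "(\<Sum>M\<in>arc_matchings A (B - {w}). g (insert (b, w) M)) = rank w * P" .
  qed
  also have "\<dots> = hpoly (int (card W)) x y * P"
    unfolding sum_distrib_right[symmetric] rank_def using insert.prems(1)
    by (subst sum_rank_powers) (simp_all add: W_def)
  also have "int (card W) = height (insert b A) B b"
  proof -
    have none_above: "{l\<in>insert b A. b < l} = {}" using insert.hyps(2) by auto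
    show ?thesis unfolding height_def none_above W_def by simp
  qed
  finally show ?case using insert.hyps(1) b by (simp add: g_def P_def)
qed

section \<open>Linked cycles and their arcs\<close>

lemma is_cycle_set: "is_cycle c \<Longrightarrow> set c = insert (hd c) (set (tl c))"
  unfolding is_cycle_def by (cases c) auto

lemma is_cycle_Min: "is_cycle c \<Longrightarrow> Min (set c) = hd c"
  unfolding is_cycle_def by simp

lemma is_cycle_hd_less_tl:
  assumes "is_cycle c" and "z \<in> set (tl c)"
  shows "hd c < z"
proof -
  have "hd c \<le> z" using assms is_cycle_set is_cycle_Min[OF assms(1)]
    by (metis Min_le finite_set insertCI)
  moreover have "hd c \<noteq> z" using assms unfolding is_cycle_def by (cases c) auto
  ultimately show ?thesis by simp
qed

lemma is_cycle_hd_notin_tl: "is_cycle c \<Longrightarrow> hd c \<notin> set (tl c)"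
  using is_cycle_hd_less_tl by blast

lemma nth_mem_set_tl: "0 < m \<Longrightarrow> m < length xs \<Longrightarrow> xs ! m \<in> set (tl xs)"
  by (cases xs; cases m) auto

lemma mem_set_tl_conv_nth: "z \<in> set (tl xs) \<longleftrightarrow> (\<exists>m. 0 < m \<and> m < length xs \<and> xs ! m = z)"
proof
  assume "z \<in> set (tl xs)"
  then obtain k where "k < length (tl xs)" "tl xs ! k = z" by (auto simp: in_set_conv_nth)
  then show "\<exists>m. 0 < m \<and> m < length xs \<and> xs ! m = z" by (intro exI[of _ "Suc k"]) (simp add: nth_tl)
qed (use nth_mem_set_tl in blast)

lemma strict_sorted_nth_less_iff:
  fixes xs :: "'a::linorder list"
  assumes "sorted_wrt (<) xs" "p < length xs" "q < length xs"
  shows "xs ! p < xs ! q \<longleftrightarrow> p < q"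
  using sorted_wrt_nth_less[OF assms(1) _ assms(3), of p]
    sorted_wrt_nth_less[OF assms(1) _ assms(2), of q]
  by (cases p q rule: linorder_cases) auto

lemma card_sorted_list_of_set_after:
  fixes V :: "'v::linorder set"
  defines "xs \<equiv> sorted_list_of_set V"
  assumes "finite V" "S \<subseteq> V" "p < length xs"
  shows "card {q. p < q \<and> q < length xs \<and> xs ! q \<in> S} = card {s\<in>S. xs ! p < s}"
proof -
  have sorted: "sorted_wrt (<) xs" and "distinct xs" and set: "set xs = V"
    using assms(2) unfolding xs_def by simp_all
  let ?Q = "{q. p < q \<and> q < length xs \<and> xs ! q \<in> S}"
  have inj: "inj_on (nth xs) ?Q" using \<open>distinct xs\<close> by (simp add: inj_on_nth)
  have img: "nth xs ` ?Q = {s\<in>S. xs ! p < s}"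
  proof
    show "nth xs ` ?Q \<subseteq> {s\<in>S. xs ! p < s}"
      using strict_sorted_nth_less_iff[OF sorted assms(4)] by auto
    show "{s\<in>S. xs ! p < s} \<subseteq> nth xs ` ?Q"
    proof
      fix s assume s: "s \<in> {s\<in>S. xs ! p < s}"
      then have "s \<in> set xs" using assms(3) set by blast
      then obtain q where q: "q < length xs" "xs ! q = s" unfolding in_set_conv_nth by blast
      then have "p < q" using strict_sorted_nth_less_iff[OF sorted assms(4) q(1)] s by simp
      then show "s \<in> nth xs ` ?Q" using q s by auto
    qed
  qed
  show ?thesis using card_image[OF inj] unfolding img by (rule sym)
qed

lemma bij_betw_nth_positions:
  assumes "distinct xs" "S \<subseteq> set xs"
  shows "bij_betw (nth xs) {p. p < length xs \<and> xs ! p \<in> S} S"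
proof (rule bij_betw_imageI)
  show "inj_on (nth xs) {p. p < length xs \<and> xs ! p \<in> S}" by (rule inj_on_nth) (use assms(1) in auto)
  show "nth xs ` {p. p < length xs \<and> xs ! p \<in> S} = S"
  proof
    show "S \<subseteq> nth xs ` {p. p < length xs \<and> xs ! p \<in> S}"
    proof
      fix v assume v: "v \<in> S"
      then have "v \<in> set xs" using assms(2) by blast
      then obtain p where "p < length xs" "xs ! p = v" unfolding in_set_conv_nth by blast
      then show "v \<in> nth xs ` {p. p < length xs \<and> xs ! p \<in> S}" using v by force
    qed
  qed auto
qed

definition heads :: "nat list set \<Rightarrow> nat set" where
  "heads C = hd ` C"

definition tails :: "nat list set \<Rightarrow> nat set" where
  "tails C = (\<Union>c\<in>C. set (tl c))"

definition arity :: "nat list set \<Rightarrow> nat \<Rightarrow> nat" where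
  "arity C i = length (min_cycle C i) - 1"

definition left_vertices :: "nat list set \<Rightarrow> (nat \<times> nat) set" where
  "left_vertices C = {(i, j) | i j. i \<in> heads C \<and> 1 \<le> j \<and> j \<le> arity C i}"

definition right_vertices :: "nat list set \<Rightarrow> (nat \<times> nat) set" where
  "right_vertices C = {(i, 0) | i. i \<in> tails C}"

lemma right_vertices_eq_image: "right_vertices C = (\<lambda>i. (i, 0)) ` tails C"
  unfolding right_vertices_def by blast

lemma mem_left_vertices: "(i, j) \<in> left_vertices C \<longleftrightarrow> i \<in> heads C \<and> j \<in> {1..arity C i}"
  unfolding left_vertices_def by auto

definition arc_target :: "nat list set \<Rightarrow> nat \<times> nat \<Rightarrow> nat" where
  "arc_target C v = min_cycle C (fst v) ! (arity C (fst v) + 1 - snd v)"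

(* Inverts lin_arcs: in the cycle (i_1 ... i_t) the arc leaving i_1^(j) ends at i_(t+1-j). *)
definition arc_cycle :: "((nat \<times> nat) \<times> (nat \<times> nat)) set \<Rightarrow> nat \<Rightarrow> nat \<Rightarrow> nat list" where
  "arc_cycle M k i = i # rev (map (\<lambda>j. fst (partner M (i, j))) [1..<k + 1])"

lemma length_arc_cycle: "length (arc_cycle M k i) = k + 1"
  unfolding arc_cycle_def by simp

lemma hd_arc_cycle: "hd (arc_cycle M k i) = i"
  unfolding arc_cycle_def by simp

lemma set_tl_arc_cycle: "set (tl (arc_cycle M k i)) = (\<lambda>j. fst (partner M (i, j))) ` {1..k}"
  unfolding arc_cycle_def by auto

lemma set_arc_cycle: "set (arc_cycle M k i) = insert i ((\<lambda>j. fst (partner M (i, j))) ` {1..k})"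
  unfolding arc_cycle_def by auto

lemma nth_arc_cycle:
  assumes "1 \<le> m" "m \<le> k"
  shows "arc_cycle M k i ! m = fst (partner M (i, k + 1 - m))"
proof -
  let ?ends = "map (\<lambda>j. fst (partner M (i, j))) [1..<k + 1]"
  obtain m' where m': "m = Suc m'" using assms(1) by (cases m) auto
  have "arc_cycle M k i ! m = rev ?ends ! m'" unfolding arc_cycle_def m' by simp
  also have "\<dots> = ?ends ! (length ?ends - Suc m')" by (rule rev_nth) (use assms m' in simp)
  also have "\<dots> = fst (partner M (i, k + 1 - m))" using assms m'
    by (simp add: Suc_diff_Suc del: upt_Suc)
  finally show ?thesis .
qed

definition arc_cycles :: "((nat \<times> nat) \<times> (nat \<times> nat)) set \<Rightarrow> nat list set \<Rightarrow> nat list set" where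
  "arc_cycles M C = (\<lambda>i. arc_cycle M (arity C i) i) ` heads C"

lemma vertex_labeling_eqD:
  assumes "finite (lin_vertices n C)" "finite (lin_vertices n D)"
    and eq: "vertex_labeling n C = vertex_labeling n D"
  shows "lin_vertices n C = lin_vertices n D"
    and "lin_vertices n C \<inter> isolated_vertices C = lin_vertices n D \<inter> isolated_vertices D"
proof -
  have labels:
    "set (vertex_labeling n E) = (\<lambda>v. (fst v, snd v, v \<in> isolated_vertices E)) ` lin_vertices n E"
    if "finite (lin_vertices n E)" for E :: "nat list set"
    unfolding vertex_labeling_def using that by simp
  have vertices: "lin_vertices n E = (\<lambda>l. (fst l, fst (snd l))) ` set (vertex_labeling n E)"
    if "finite (lin_vertices n E)" for E :: "nat list set"
    unfolding labels[OF that] by (simp add: image_image)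
  have isolated:
    "lin_vertices n E \<inter> isolated_vertices E = {(i, j). (i, j, True) \<in> set (vertex_labeling n E)}"
    if "finite (lin_vertices n E)" for E :: "nat list set"
    unfolding labels[OF that] by (auto simp: image_iff intro!: bexI)
  show "lin_vertices n C = lin_vertices n D"
    using vertices assms by metis
  show "lin_vertices n C \<inter> isolated_vertices C = lin_vertices n D \<inter> isolated_vertices D"
    using isolated assms by metis
qed

locale is_linked_cycle =
  fixes n :: nat and C :: "nat list set"
  assumes linked: "linked_cycle n C"
begin

lemma is_cycle_mem: "c \<in> C \<Longrightarrow> is_cycle c"
  using linked unfolding linked_cycle_def by blast

lemma cycles_subset: "c \<in> C \<Longrightarrow> set c \<subseteq> {1..n}"
  using linked unfolding linked_cycle_def linked_partition_def by blast

lemma Union_cycles: "(\<Union>c\<in>C. set c) = {1..n}"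
  using linked unfolding linked_cycle_def linked_partition_def by blast

lemma finite_cycles: "finite C"
proof -
  have "set ` C \<subseteq> Pow {1..n}" using cycles_subset by blast
  then have "finite (set ` C)" by (rule finite_subset) simp
  then show ?thesis using linked finite_imageD unfolding linked_cycle_def by blast
qed

lemma nearly_disjoint_cycles:
  assumes "c1 \<in> C" "c2 \<in> C" "c1 \<noteq> c2"
  shows "nearly_disjoint (set c1) (set c2)"
proof -
  have "set c1 \<noteq> set c2" using assms linked unfolding linked_cycle_def inj_on_def by metis
  then show ?thesis using assms linked unfolding linked_cycle_def linked_partition_def by blast
qed

lemma common_element:
  assumes "c1 \<in> C" "c2 \<in> C" "c1 \<noteq> c2" "z \<in> set c1" "z \<in> set c2"
  shows "(z = hd c1 \<and> length c1 > 1 \<and> z \<noteq> hd c2) \<or> (z = hd c2 \<and> length c2 > 1 \<and> z \<noteq> hd c1)"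
  using nearly_disjoint_cycles[OF assms(1-3)] assms(4,5)
    is_cycle_mem[OF assms(1)] is_cycle_mem[OF assms(2)]
  unfolding nearly_disjoint_def is_cycle_def by (simp add: distinct_card)

lemma cycle_eqI_hd: "c1 \<in> C \<Longrightarrow> c2 \<in> C \<Longrightarrow> hd c1 = hd c2 \<Longrightarrow> c1 = c2"
  using common_element is_cycle_set is_cycle_mem by (metis insertI1)

lemma cycle_eqI_tl: "c1 \<in> C \<Longrightarrow> c2 \<in> C \<Longrightarrow> z \<in> set (tl c1) \<Longrightarrow> z \<in> set (tl c2) \<Longrightarrow> c1 = c2"
  using common_element is_cycle_set is_cycle_hd_notin_tl is_cycle_mem by (metis insertI2)

lemma length_ge_2_if_hd_in_tl:
  assumes "c1 \<in> C" "c2 \<in> C" "hd c1 \<in> set (tl c2)"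
  shows "2 \<le> length c1"
proof -
  have ne: "c1 \<noteq> c2" and neq: "hd c1 \<noteq> hd c2"
    using assms is_cycle_mem is_cycle_hd_notin_tl by metis+
  have "hd c1 \<in> set c1" "hd c1 \<in> set c2"
    using assms(3) is_cycle_set is_cycle_mem[OF assms(1)] is_cycle_mem[OF assms(2)] by blast+
  then have "length c1 > 1" using common_element[OF assms(1,2) ne] neq by blast
  then show ?thesis by simp
qed

lemma heads_Un_tails: "heads C \<union> tails C = {1..n}"
proof -
  have "set c = insert (hd c) (set (tl c))" if "c \<in> C" for c
    using is_cycle_set is_cycle_mem that by blast
  then have "heads C \<union> tails C = (\<Union>c\<in>C. set c)" unfolding heads_def tails_def by blast
  then show ?thesis using Union_cycles by simp
qed

lemma min_cycle_hd: "c \<in> C \<Longrightarrow> min_cycle C (hd c) = c"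
  unfolding min_cycle_def using cycle_eqI_hd by (intro the_equality) auto

lemma min_cycle_mem: "i \<in> heads C \<Longrightarrow> min_cycle C i \<in> C \<and> hd (min_cycle C i) = i"
  unfolding heads_def using min_cycle_hd by auto

lemma length_min_cycle:
  assumes "i \<in> heads C"
  shows "length (min_cycle C i) = arity C i + 1"
proof -
  have "min_cycle C i \<noteq> []" using min_cycle_mem[OF assms] is_cycle_mem unfolding is_cycle_def
    by blast
  then show ?thesis unfolding arity_def by simp
qed

lemma arity_hd: "c \<in> C \<Longrightarrow> arity C (hd c) = length c - 1"
  unfolding arity_def by (simp add: min_cycle_hd)

lemma arity_pos_if_tail: "i \<in> heads C \<Longrightarrow> i \<in> tails C \<Longrightarrow> 1 \<le> arity C i"
  unfolding heads_def tails_def using length_ge_2_if_hd_in_tl arity_hd by fastforce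

lemma card_cycles_containing:
  "card (cycles_containing C i) = (if i \<in> heads C then 1 else 0) + (if i \<in> tails C then 1 else 0)"
proof -
  have card_hd: "card {c\<in>C. hd c = i} = (if i \<in> heads C then 1 else 0)"
  proof (cases "i \<in> heads C")
    case True
    then obtain c where "c \<in> C" "hd c = i" unfolding heads_def by blast
    then have "{c\<in>C. hd c = i} = {c}" using cycle_eqI_hd by blast
    then show ?thesis using True by simp
  next
    case False
    then have none: "{c\<in>C. hd c = i} = {}" unfolding heads_def by blast
    show ?thesis unfolding none using False by simp
  qed
  have card_tl: "card {c\<in>C. i \<in> set (tl c)} = (if i \<in> tails C then 1 else 0)"
  proof (cases "i \<in> tails C")
    case True
    then obtain c where "c \<in> C" "i \<in> set (tl c)" unfolding tails_def by blast
    then have "{c\<in>C. i \<in> set (tl c)} = {c}" using cycle_eqI_tl by blast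
    then show ?thesis using True by simp
  next
    case False
    then have none: "{c\<in>C. i \<in> set (tl c)} = {}" unfolding tails_def by blast
    show ?thesis unfolding none using False by simp
  qed
  have "i \<in> set c \<longleftrightarrow> hd c = i \<or> i \<in> set (tl c)" if "c \<in> C" for c
    using is_cycle_set[OF is_cycle_mem[OF that]] by auto
  then have "cycles_containing C i = {c\<in>C. hd c = i} \<union> {c\<in>C. i \<in> set (tl c)}"
    unfolding cycles_containing_def by blast
  moreover have "{c\<in>C. hd c = i} \<inter> {c\<in>C. i \<in> set (tl c)} = {}"
    using is_cycle_hd_notin_tl is_cycle_mem by blast
  ultimately show ?thesis using finite_cycles card_hd card_tl by (simp add: card_Un_disjoint)
qed

lemma isolated_vertices_eq: "isolated_vertices C = {(i, 1) | i. i \<in> heads C \<and> arity C i = 0}"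
proof -
  have "length c = 1 \<longleftrightarrow> arity C (hd c) = 0" if "c \<in> C" for c
  proof -
    have "c \<noteq> []" using is_cycle_mem[OF that] unfolding is_cycle_def by blast
    then show ?thesis using arity_hd[OF that] by (cases c) auto
  qed
  then show ?thesis unfolding isolated_vertices_def heads_def by blast
qed

lemma verts_of_eq:
  assumes "i \<in> {1..n}"
  shows "verts_of C i =
    (if i \<in> tails C then {(i, 0)} else {}) \<union>
    (if i \<in> heads C then {(i, j) | j. 1 \<le> j \<and> j \<le> max 1 (arity C i)} else {})"
proof -
  have cover: "i \<in> heads C \<or> i \<in> tails C" using assms heads_Un_tails by blast
  have is_min: "is_cycle_min C i \<longleftrightarrow> i \<in> heads C"
    unfolding is_cycle_min_def heads_def by blast
  note card = card_cycles_containing[of i]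
  consider "i \<in> heads C" "i \<in> tails C" | "i \<in> heads C" "i \<notin> tails C" | "i \<notin> heads C" "i \<in> tails C"
    using cover by blast
  then show ?thesis
  proof cases
    case 1
    then have "doubly_covered C i" "\<not> singly_covered C i"
      using card unfolding doubly_covered_def singly_covered_def by simp_all
    then show ?thesis
      using 1 is_min arity_pos_if_tail[OF 1] unfolding verts_of_def arity_def[symmetric] Let_def
      by auto
  next
    case 2
    then have "singly_covered C i"
      using card unfolding singly_covered_def by simp
    then show ?thesis
      using 2 is_min unfolding verts_of_def arity_def[symmetric] Let_def by (auto simp: max_def)
  next
    case 3
    then have "singly_covered C i"
      using card unfolding singly_covered_def by simp
    then show ?thesis
      using 3 is_min unfolding verts_of_def Let_def by auto
  qed
qed

lemma lin_vertices_eq: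
  "lin_vertices n C = left_vertices C \<union> right_vertices C \<union> isolated_vertices C"
proof -
  have "lin_vertices n C = (\<Union>i\<in>{1..n}.
      (if i \<in> tails C then {(i, 0)} else {}) \<union>
      (if i \<in> heads C then {(i, j) | j. 1 \<le> j \<and> j \<le> max 1 (arity C i)} else {}))"
    unfolding lin_vertices_def using verts_of_eq by simp
  also have "\<dots> = left_vertices C \<union> right_vertices C \<union> isolated_vertices C"
    using heads_Un_tails
    unfolding isolated_vertices_eq left_vertices_def right_vertices_def
    by (auto simp: max_def split: if_splits)
  finally show ?thesis .
qed


lemma finite_lin_vertices: "finite (lin_vertices n C)"
proof -
  have "finite (verts_of C i)" for i
    by (rule finite_subset[of _ "{i} \<times> {0..Suc (length (min_cycle C i))}"])
      (auto simp: verts_of_def Let_def)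
  then show ?thesis unfolding lin_vertices_def by simp
qed

lemma left_vertices_eq:
  "left_vertices C = {v\<in>lin_vertices n C. 1 \<le> snd v \<and> v \<notin> isolated_vertices C}"
  unfolding lin_vertices_eq
  by (auto simp: left_vertices_def right_vertices_def isolated_vertices_eq)

lemma right_vertices_eq: "right_vertices C = {v\<in>lin_vertices n C. snd v = 0}"
  unfolding lin_vertices_eq
  by (auto simp: left_vertices_def right_vertices_def isolated_vertices_eq)

lemma heads_eq: "heads C = {i. (i, 1) \<in> lin_vertices n C}"
  unfolding lin_vertices_eq
  by (auto simp: left_vertices_def right_vertices_def isolated_vertices_eq)

lemma arity_eq_card: "i \<in> heads C \<Longrightarrow> arity C i = card {j. (i, j) \<in> left_vertices C}"
proof -
  assume "i \<in> heads C"
  then have "{j. (i, j) \<in> left_vertices C} = {1..arity C i}" unfolding left_vertices_def by auto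
  then show ?thesis by simp
qed

lemma arc_target_mem_tl:
  assumes "v \<in> left_vertices C"
  shows "arc_target C v \<in> set (tl (min_cycle C (fst v)))"
proof -
  obtain i j where v: "v = (i, j)" "i \<in> heads C" "1 \<le> j" "j \<le> arity C i"
    using assms unfolding left_vertices_def by blast
  then show ?thesis
    unfolding arc_target_def using length_min_cycle[OF v(2)] by (intro nth_mem_set_tl) auto
qed

lemma lin_arcs_eq: "lin_arcs C = (\<lambda>v. (v, (arc_target C v, 0::nat))) ` left_vertices C"
proof (rule set_eqI, rule iffI)
  fix a assume "a \<in> lin_arcs C"
  then obtain c j where a: "a = ((hd c, j), (c ! (length c - j), 0))" and c: "c \<in> C"
    and j: "2 \<le> length c" "1 \<le> j" "j \<le> length c - 1"
    unfolding lin_arcs_def by blast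
  have "(hd c, j) \<in> left_vertices C"
    using c j arity_hd[OF c] unfolding left_vertices_def heads_def by auto
  moreover have "arc_target C (hd c, j) = c ! (length c - j)"
    using j arity_hd[OF c] min_cycle_hd[OF c] unfolding arc_target_def by simp
  ultimately show "a \<in> (\<lambda>v. (v, (arc_target C v, 0::nat))) ` left_vertices C" using a by force
next
  fix a assume "a \<in> (\<lambda>v. (v, (arc_target C v, 0::nat))) ` left_vertices C"
  then obtain i j where a: "a = ((i, j), (arc_target C (i, j), 0::nat))" and i: "i \<in> heads C"
    and j: "1 \<le> j" "j \<le> arity C i"
    unfolding left_vertices_def by blast
  let ?c = "min_cycle C i"
  have "?c \<in> C" "hd ?c = i" "length ?c = arity C i + 1"
    using min_cycle_mem[OF i] length_min_cycle[OF i] by auto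
  then show "a \<in> lin_arcs C"
    using a j unfolding lin_arcs_def arc_target_def by (auto intro!: exI[of _ ?c] exI[of _ j])
qed

lemma inj_on_arc_target: "inj_on (arc_target C) (left_vertices C)"
proof (rule inj_onI)
  fix v w assume v: "v \<in> left_vertices C" and w: "w \<in> left_vertices C"
    and eq: "arc_target C v = arc_target C w"
  obtain i j where vij: "v = (i, j)" "i \<in> heads C" "1 \<le> j" "j \<le> arity C i"
    using v unfolding left_vertices_def by blast
  obtain i' j' where wij: "w = (i', j')" "i' \<in> heads C" "1 \<le> j'" "j' \<le> arity C i'"
    using w unfolding left_vertices_def by blast
  have "min_cycle C i = min_cycle C i'"
    using cycle_eqI_tl min_cycle_mem vij(2) wij(2) arc_target_mem_tl[OF v] arc_target_mem_tl[OF w]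
      eq vij(1) wij(1)
    by simp
  then have i: "i' = i" using min_cycle_mem vij(2) wij(2) by metis
  let ?c = "min_cycle C i"
  have "distinct ?c" using is_cycle_mem min_cycle_mem[OF vij(2)] unfolding is_cycle_def by blast
  moreover have "?c ! (arity C i + 1 - j) = ?c ! (arity C i + 1 - j')"
    using eq vij(1) wij(1) i unfolding arc_target_def by simp
  ultimately have "arity C i + 1 - j = arity C i + 1 - j'"
    using length_min_cycle[OF vij(2)] vij wij i by (simp add: nth_eq_iff_index_eq)
  then show "v = w" using vij wij i by simp
qed

lemma arc_target_image: "arc_target C ` left_vertices C = tails C"
proof
  show "arc_target C ` left_vertices C \<subseteq> tails C"
    using arc_target_mem_tl min_cycle_mem unfolding left_vertices_def tails_def by fastforce
  show "tails C \<subseteq> arc_target C ` left_vertices C"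
  proof
    fix z assume "z \<in> tails C"
    then obtain c where c: "c \<in> C" "z \<in> set (tl c)" unfolding tails_def by blast
    then obtain m where m: "0 < m" "m < length c" "c ! m = z"
      unfolding mem_set_tl_conv_nth by blast
    have "(hd c, length c - m) \<in> left_vertices C"
      using c m arity_hd[OF c(1)] unfolding left_vertices_def heads_def by auto
    moreover have "z = arc_target C (hd c, length c - m)"
      using m arity_hd[OF c(1)] min_cycle_hd[OF c(1)] unfolding arc_target_def by simp
    ultimately show "z \<in> arc_target C ` left_vertices C" by (rule rev_image_eqI)
  qed
qed

lemma bij_betw_arc_target:
  "bij_betw (\<lambda>v. (arc_target C v, 0::nat)) (left_vertices C) (right_vertices C)"
proof (rule bij_betw_imageI)
  show "inj_on (\<lambda>v. (arc_target C v, 0::nat)) (left_vertices C)"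
    using inj_on_arc_target unfolding inj_on_def by simp
  show "(\<lambda>v. (arc_target C v, 0::nat)) ` left_vertices C = right_vertices C"
    unfolding right_vertices_eq_image arc_target_image[symmetric] by (simp add: image_image)
qed

lemma lin_arcs_in_arc_matchings: "lin_arcs C \<in> arc_matchings (left_vertices C) (right_vertices C)"
proof -
  have "v < (arc_target C v, 0::nat)" if "v \<in> left_vertices C" for v
    using is_cycle_hd_less_tl[OF is_cycle_mem arc_target_mem_tl[OF that]] min_cycle_mem that
    unfolding left_vertices_def by auto
  then show ?thesis
    unfolding lin_arcs_eq by (intro graph_in_arc_matchings bij_betw_arc_target) blast
qed

lemma partner_lin_arcs: "v \<in> left_vertices C \<Longrightarrow> partner (lin_arcs C) v = (arc_target C v, 0::nat)"
  using partner_eqI[OF lin_arcs_in_arc_matchings] unfolding lin_arcs_eq by blast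

lemma min_cycle_eq_arc_cycle:
  assumes i: "i \<in> heads C"
  shows "min_cycle C i = arc_cycle (lin_arcs C) (arity C i) i"
proof (rule nth_equalityI)
  let ?c = "min_cycle C i" and ?k = "arity C i"
  show "length ?c = length (arc_cycle (lin_arcs C) ?k i)"
    using length_min_cycle[OF i] by (simp add: length_arc_cycle)
  fix m assume "m < length ?c"
  then have m: "m \<le> ?k" using length_min_cycle[OF i] by simp
  show "?c ! m = arc_cycle (lin_arcs C) ?k i ! m"
  proof (cases "m = 0")
    case True
    have "?c \<noteq> []" using length_min_cycle[OF i] by auto
    then show ?thesis using True min_cycle_mem[OF i] by (simp add: arc_cycle_def hd_conv_nth)
  next
    case False
    then have "(i, ?k + 1 - m) \<in> left_vertices C" using i m unfolding left_vertices_def by auto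
    then show ?thesis
      using False m by (simp add: nth_arc_cycle partner_lin_arcs arc_target_def)
  qed
qed

lemma cycles_eq_arc_cycles: "C = arc_cycles (lin_arcs C) C"
proof -
  have "C = min_cycle C ` heads C" unfolding heads_def using min_cycle_hd by force
  then show ?thesis unfolding arc_cycles_def using min_cycle_eq_arc_cycle by simp
qed


lemma same_vertex_labeling:
  assumes D: "is_linked_cycle n D" and eq: "vertex_labeling n D = vertex_labeling n C"
  shows "left_vertices D = left_vertices C" and "right_vertices D = right_vertices C"
    and "heads D = heads C" and "\<And>i. i \<in> heads C \<Longrightarrow> arity D i = arity C i"
proof -
  note fin = is_linked_cycle.finite_lin_vertices[OF D] finite_lin_vertices
  have V: "lin_vertices n D = lin_vertices n C"
    and I: "lin_vertices n D \<inter> isolated_vertices D = lin_vertices n C \<inter> isolated_vertices C"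
    using vertex_labeling_eqD[OF fin eq] by blast+
  show left: "left_vertices D = left_vertices C"
    using is_linked_cycle.left_vertices_eq[OF D] left_vertices_eq V I by blast
  show "right_vertices D = right_vertices C"
    using is_linked_cycle.right_vertices_eq[OF D] right_vertices_eq V by blast
  show heads: "heads D = heads C"
    using is_linked_cycle.heads_eq[OF D] heads_eq V by blast
  show "arity D i = arity C i" if "i \<in> heads C" for i
    using is_linked_cycle.arity_eq_card[OF D] arity_eq_card that heads left by simp
qed

lemma eq_if_same_labeling_and_arcs:
  assumes D: "is_linked_cycle n D"
    and "vertex_labeling n D = vertex_labeling n C" and "lin_arcs D = lin_arcs C"
  shows "D = C"
proof -
  have "D = arc_cycles (lin_arcs D) D" by (rule is_linked_cycle.cycles_eq_arc_cycles[OF D])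
  also have "\<dots> = arc_cycles (lin_arcs C) C"
    unfolding arc_cycles_def using same_vertex_labeling[OF assms(1,2)] assms(3) by simp
  also have "\<dots> = C" by (rule cycles_eq_arc_cycles[symmetric])
  finally show ?thesis .
qed

end

section \<open>Linked cycles from matchings\<close>

locale arc_matching_rebuild = is_linked_cycle +
  fixes M :: "((nat \<times> nat) \<times> (nat \<times> nat)) set"
  assumes matching: "M \<in> arc_matchings (left_vertices C) (right_vertices C)"
begin

abbreviation target :: "nat \<times> nat \<Rightarrow> nat" where
  "target v \<equiv> fst (partner M v)"

lemma partner_eq_target: "v \<in> left_vertices C \<Longrightarrow> partner M v = (target v, 0)"
  using bij_betwE[OF bij_betw_partner[OF matching]] unfolding right_vertices_def by fastforce

lemma target_in_tails: "v \<in> left_vertices C \<Longrightarrow> target v \<in> tails C"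
  using bij_betwE[OF bij_betw_partner[OF matching]] unfolding right_vertices_def by fastforce

lemma fst_less_target:
  assumes v: "v \<in> left_vertices C"
  shows "fst v < target v"
proof -
  have "v < (target v, 0)"
    using arc_matching_less[OF matching partner_mem[OF matching v]] partner_eq_target[OF v] by simp
  then show ?thesis by (cases v) auto
qed

lemma inj_on_target: "inj_on target (left_vertices C)"
  using bij_betw_imp_inj_on[OF bij_betw_partner[OF matching]] partner_eq_target
  unfolding inj_on_def by metis

lemma target_image: "target ` left_vertices C = tails C"
proof -
  have "target ` left_vertices C = fst ` partner M ` left_vertices C" by (simp add: image_image)
  also have "partner M ` left_vertices C = (\<lambda>i. (i, 0)) ` tails C"
    using bij_betw_partner[OF matching] unfolding bij_betw_def right_vertices_eq_image by blast
  finally show ?thesis by (simp add: image_image)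
qed

lemma arc_cycle_is_cycle:
  assumes i: "i \<in> heads C"
  shows "is_cycle (arc_cycle M (arity C i) i)"
proof -
  let ?c = "arc_cycle M (arity C i) i"
  have gt: "i < z" if z: "z \<in> set (tl ?c)" for z
  proof -
    obtain j where "j \<in> {1..arity C i}" "z = target (i, j)"
      using z unfolding set_tl_arc_cycle by blast
    then show "i < z" using fst_less_target[of "(i, j)"] i mem_left_vertices by simp
  qed
  have "inj_on (\<lambda>j. target (i, j)) {1..arity C i}"
  proof (rule inj_onI)
    fix j j' assume "j \<in> {1..arity C i}" "j' \<in> {1..arity C i}" "target (i, j) = target (i, j')"
    then show "j = j'" using inj_onD[OF inj_on_target, of "(i, j)" "(i, j')"] i
      by (simp add: mem_left_vertices)
  qed
  then have "distinct (tl ?c)"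
    unfolding arc_cycle_def
    by (simp add: distinct_map atLeastLessThanSuc_atLeastAtMost del: upt_Suc)
  moreover have "i \<notin> set (tl ?c)" using gt by blast
  ultimately have "distinct ?c" unfolding arc_cycle_def by simp
  moreover have "Min (set ?c) = i"
    using gt unfolding set_arc_cycle set_tl_arc_cycle by (intro Min_eqI) (auto simp: less_imp_le)
  ultimately show ?thesis unfolding is_cycle_def by (simp add: arc_cycle_def)
qed

lemma Min_arc_cycle: "i \<in> heads C \<Longrightarrow> Min (set (arc_cycle M (arity C i) i)) = i"
  using is_cycle_Min[OF arc_cycle_is_cycle] hd_arc_cycle by simp

lemma card_arc_cycle:
  assumes "i \<in> heads C"
  shows "card (set (arc_cycle M (arity C i) i)) = arity C i + 1"
proof -
  have "distinct (arc_cycle M (arity C i) i)"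
    using arc_cycle_is_cycle[OF assms] unfolding is_cycle_def by blast
  then show ?thesis by (simp add: distinct_card length_arc_cycle)
qed

lemma arc_cycle_subset:
  assumes i: "i \<in> heads C"
  shows "set (arc_cycle M (arity C i) i) \<subseteq> {1..n}"
proof -
  have "target (i, j) \<in> tails C" if "j \<in> {1..arity C i}" for j
    using target_in_tails[of "(i, j)"] i that by (simp add: mem_left_vertices)
  then show ?thesis using i heads_Un_tails unfolding set_arc_cycle by blast
qed

lemma arity_pos_if_mem_arc_cycle:
  assumes h: "h \<in> heads C" "h' \<in> heads C" "h \<noteq> h'" "h \<in> set (arc_cycle M (arity C h') h')"
  shows "1 \<le> arity C h"
proof -
  obtain j where "j \<in> {1..arity C h'}" "h = target (h', j)"
    using h(3,4) unfolding set_arc_cycle by blast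
  then have "h \<in> tails C" using target_in_tails[of "(h', j)"] h(2) by (simp add: mem_left_vertices)
  then show ?thesis using arity_pos_if_tail h(1) by blast
qed

lemma arc_cycles_nearly_disjoint:
  assumes i: "i \<in> heads C" and i': "i' \<in> heads C" and ne: "i \<noteq> i'"
  shows "nearly_disjoint (set (arc_cycle M (arity C i) i)) (set (arc_cycle M (arity C i') i'))"
  unfolding nearly_disjoint_def Min_arc_cycle[OF i] Min_arc_cycle[OF i']
    card_arc_cycle[OF i] card_arc_cycle[OF i']
proof
  fix z assume z: "z \<in> set (arc_cycle M (arity C i) i) \<inter> set (arc_cycle M (arity C i') i')"
  consider "z = i" | "z = i'" | "z \<noteq> i" "z \<noteq> i'" by blast
  then show "z = i \<and> 1 < arity C i + 1 \<and> z \<noteq> i' \<or> z = i' \<and> 1 < arity C i' + 1 \<and> z \<noteq> i"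
  proof cases
    case 1
    then show ?thesis using arity_pos_if_mem_arc_cycle[OF i i' ne] z ne by simp
  next
    case 2
    then show ?thesis using arity_pos_if_mem_arc_cycle[OF i' i ne[symmetric]] z ne by simp
  next
    case 3
    obtain j where j: "j \<in> {1..arity C i}" "z = target (i, j)"
      using z 3 unfolding set_arc_cycle by blast
    obtain j' where j': "j' \<in> {1..arity C i'}" "z = target (i', j')"
      using z 3 unfolding set_arc_cycle by blast
    have "(i, j) = (i', j')"
      using inj_onD[OF inj_on_target, of "(i, j)" "(i', j')"] i i' j j'
      by (simp add: mem_left_vertices)
    then show ?thesis using ne by simp
  qed
qed

lemma arc_cycles_linked_cycle: "linked_cycle n (arc_cycles M C)"
  unfolding linked_cycle_def
proof (intro conjI)
  show "\<forall>c\<in>arc_cycles M C. is_cycle c"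
    unfolding arc_cycles_def using arc_cycle_is_cycle by blast
  show "inj_on set (arc_cycles M C)"
    unfolding arc_cycles_def by (rule inj_onI) (metis (no_types, lifting) Min_arc_cycle imageE)
  show "linked_partition n (set ` arc_cycles M C)"
    unfolding linked_partition_def
  proof (intro conjI)
    show "\<forall>B\<in>set ` arc_cycles M C. B \<noteq> {} \<and> B \<subseteq> {1..n}"
    proof
      fix B assume "B \<in> set ` arc_cycles M C"
      then obtain i where i: "i \<in> heads C" "B = set (arc_cycle M (arity C i) i)"
        unfolding arc_cycles_def by blast
      then have "i \<in> B" by (simp add: set_arc_cycle)
      then show "B \<noteq> {} \<and> B \<subseteq> {1..n}" using arc_cycle_subset[OF i(1)] i(2) by blast
    qed
    have "\<Union> (set ` arc_cycles M C) = heads C \<union> target ` left_vertices C"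
      unfolding arc_cycles_def image_image set_arc_cycle left_vertices_def by auto
    then show "\<Union> (set ` arc_cycles M C) = {1..n}"
      using target_image heads_Un_tails by simp
    show "\<forall>E\<in>set ` arc_cycles M C. \<forall>F\<in>set ` arc_cycles M C. E \<noteq> F \<longrightarrow> nearly_disjoint E F"
    proof (intro ballI impI)
      fix E F assume "E \<in> set ` arc_cycles M C" "F \<in> set ` arc_cycles M C" "E \<noteq> F"
      then obtain i i' where "i \<in> heads C" "i' \<in> heads C" "i \<noteq> i'"
        and "E = set (arc_cycle M (arity C i) i)" "F = set (arc_cycle M (arity C i') i')"
        unfolding arc_cycles_def by blast
      then show "nearly_disjoint E F" using arc_cycles_nearly_disjoint by blast
    qed
  qed
qed

lemma arc_cycles_is_linked_cycle: "is_linked_cycle n (arc_cycles M C)"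
  using arc_cycles_linked_cycle by (simp add: is_linked_cycle_def)

lemma heads_arc_cycles: "heads (arc_cycles M C) = heads C"
  unfolding arc_cycles_def heads_def[of "_ ` _"] by (simp add: image_image hd_arc_cycle)

lemma min_cycle_arc_cycles: "i \<in> heads C \<Longrightarrow> min_cycle (arc_cycles M C) i = arc_cycle M (arity C i) i"
  using is_linked_cycle.min_cycle_hd[OF arc_cycles_is_linked_cycle, of "arc_cycle M (arity C i) i"]
  unfolding arc_cycles_def by (simp add: hd_arc_cycle)

lemma arity_arc_cycles: "i \<in> heads C \<Longrightarrow> arity (arc_cycles M C) i = arity C i"
  by (simp add: arity_def[of "arc_cycles M C"] min_cycle_arc_cycles length_arc_cycle)

lemma left_vertices_arc_cycles: "left_vertices (arc_cycles M C) = left_vertices C"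
  unfolding left_vertices_def using heads_arc_cycles arity_arc_cycles by auto

lemma right_vertices_arc_cycles: "right_vertices (arc_cycles M C) = right_vertices C"
proof -
  have "tails (arc_cycles M C) = target ` left_vertices C"
    unfolding tails_def arc_cycles_def image_image set_tl_arc_cycle left_vertices_def
    by auto
  then show ?thesis unfolding right_vertices_def target_image by simp
qed

lemma vertex_labeling_arc_cycles: "vertex_labeling n (arc_cycles M C) = vertex_labeling n C"
proof -
  have "isolated_vertices (arc_cycles M C) = isolated_vertices C"
    unfolding isolated_vertices_eq
      is_linked_cycle.isolated_vertices_eq[OF arc_cycles_is_linked_cycle]
    using heads_arc_cycles arity_arc_cycles by auto
  then show ?thesis
    unfolding vertex_labeling_def lin_vertices_eq
      is_linked_cycle.lin_vertices_eq[OF arc_cycles_is_linked_cycle]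
      left_vertices_arc_cycles right_vertices_arc_cycles by simp
qed

lemma lin_arcs_arc_cycles: "lin_arcs (arc_cycles M C) = M"
proof -
  have "arc_target (arc_cycles M C) v = target v" if v: "v \<in> left_vertices C" for v
  proof -
    obtain i j where ij: "v = (i, j)" "i \<in> heads C" "1 \<le> j" "j \<le> arity C i"
      using v unfolding left_vertices_def by blast
    then show ?thesis
      by (simp add: arc_target_def arity_arc_cycles min_cycle_arc_cycles nth_arc_cycle)
  qed
  then have "lin_arcs (arc_cycles M C) = (\<lambda>v. (v, partner M v)) ` left_vertices C"
    unfolding is_linked_cycle.lin_arcs_eq[OF arc_cycles_is_linked_cycle] left_vertices_arc_cycles
    using partner_eq_target by simp
  also have "\<dots> = M" by (rule arc_matching_eq_graph[OF matching, symmetric])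
  finally show ?thesis .
qed

end

section \<open>Summation over a vertex labeling\<close>

context is_linked_cycle
begin

lemma bij_betw_lin_arcs_LC:
  "bij_betw lin_arcs (LC n (vertex_labeling n C))
    (arc_matchings (left_vertices C) (right_vertices C))"
proof (rule bij_betw_imageI)
  have linked: "is_linked_cycle n D" and labeling: "vertex_labeling n D = vertex_labeling n C"
    if "D \<in> LC n (vertex_labeling n C)" for D
    using that unfolding LC_def is_linked_cycle_def by blast+
  show "inj_on lin_arcs (LC n (vertex_labeling n C))"
  proof (rule inj_onI)
    fix D E assume D: "D \<in> LC n (vertex_labeling n C)" and E: "E \<in> LC n (vertex_labeling n C)"
      and arcs: "lin_arcs D = lin_arcs E"
    show "D = E"
      using is_linked_cycle.eq_if_same_labeling_and_arcs[OF linked[OF E] linked[OF D]]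
        labeling[OF D] labeling[OF E] arcs by simp
  qed
  show "lin_arcs ` LC n (vertex_labeling n C) = arc_matchings (left_vertices C) (right_vertices C)"
  proof
    show "lin_arcs ` LC n (vertex_labeling n C)
        \<subseteq> arc_matchings (left_vertices C) (right_vertices C)"
      using is_linked_cycle.lin_arcs_in_arc_matchings[OF linked]
        same_vertex_labeling[OF linked labeling] by auto
    show "arc_matchings (left_vertices C) (right_vertices C)
        \<subseteq> lin_arcs ` LC n (vertex_labeling n C)"
    proof
      fix M assume "M \<in> arc_matchings (left_vertices C) (right_vertices C)"
      then interpret arc_matching_rebuild n C M
        by unfold_locales
      have "arc_cycles M C \<in> LC n (vertex_labeling n C)"
        unfolding LC_def using arc_cycles_linked_cycle vertex_labeling_arc_cycles by simp
      then show "M \<in> lin_arcs ` LC n (vertex_labeling n C)"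
        using lin_arcs_arc_cycles by force
    qed
  qed
qed

lemma is_left_end_vertex_labeling:
  assumes "p < length (vertex_labeling n C)"
  shows "is_left_end (vertex_labeling n C ! p)
    \<longleftrightarrow> sorted_list_of_set (lin_vertices n C) ! p \<in> left_vertices C"
proof -
  have "sorted_list_of_set (lin_vertices n C) ! p \<in> lin_vertices n C"
    using assms finite_lin_vertices nth_mem[of p "sorted_list_of_set (lin_vertices n C)"]
    by (simp add: vertex_labeling_def)
  then show ?thesis using assms unfolding left_vertices_eq is_left_end_def
    by (simp add: vertex_labeling_def)
qed

lemma is_right_end_vertex_labeling:
  assumes "p < length (vertex_labeling n C)"
  shows "is_right_end (vertex_labeling n C ! p)
    \<longleftrightarrow> sorted_list_of_set (lin_vertices n C) ! p \<in> right_vertices C"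
proof -
  have "sorted_list_of_set (lin_vertices n C) ! p \<in> lin_vertices n C"
    using assms finite_lin_vertices nth_mem[of p "sorted_list_of_set (lin_vertices n C)"]
    by (simp add: vertex_labeling_def)
  then show ?thesis using assms unfolding right_vertices_eq is_right_end_def
    by (simp add: vertex_labeling_def)
qed

lemma hval_eq_height:
  assumes p: "p < length (vertex_labeling n C)"
  shows "hval (vertex_labeling n C) p
    = height (left_vertices C) (right_vertices C) (sorted_list_of_set (lin_vertices n C) ! p)"
proof -
  let ?L = "vertex_labeling n C" and ?xs = "sorted_list_of_set (lin_vertices n C)"
  have len: "length ?L = length ?xs" by (simp add: vertex_labeling_def)
  have "{q. p < q \<and> q < length ?L \<and> is_right_end (?L ! q)}
      = {q. p < q \<and> q < length ?xs \<and> ?xs ! q \<in> right_vertices C}"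
    "{q. p < q \<and> q < length ?L \<and> is_left_end (?L ! q)}
      = {q. p < q \<and> q < length ?xs \<and> ?xs ! q \<in> left_vertices C}"
    using is_right_end_vertex_labeling is_left_end_vertex_labeling len by auto
  moreover have "left_vertices C \<subseteq> lin_vertices n C" "right_vertices C \<subseteq> lin_vertices n C"
    unfolding lin_vertices_eq by blast+
  ultimately show ?thesis
    unfolding hval_def height_def
    using card_sorted_list_of_set_after[OF finite_lin_vertices _ p[unfolded len]] by simp
qed

lemma prod_left_end_positions:
  fixes f :: "int \<Rightarrow> 'a::comm_monoid_mult"
  defines "L \<equiv> vertex_labeling n C"
  shows "(\<Prod>p\<in>{p. p < length L \<and> is_left_end (L ! p)}. f (hval L p))
       = (\<Prod>v\<in>left_vertices C. f (height (left_vertices C) (right_vertices C) v))"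
proof -
  let ?xs = "sorted_list_of_set (lin_vertices n C)"
  let ?P = "{p. p < length ?xs \<and> ?xs ! p \<in> left_vertices C}"
  have len: "length L = length ?xs" unfolding L_def by (simp add: vertex_labeling_def)
  have positions: "{p. p < length L \<and> is_left_end (L ! p)} = ?P"
    using is_left_end_vertex_labeling len unfolding L_def by auto
  have "(\<Prod>p\<in>{p. p < length L \<and> is_left_end (L ! p)}. f (hval L p))
      = (\<Prod>p\<in>?P. f (height (left_vertices C) (right_vertices C) (?xs ! p)))"
    unfolding positions using hval_eq_height len unfolding L_def by (intro prod.cong) auto
  also have "\<dots> = (\<Prod>v\<in>left_vertices C. f (height (left_vertices C) (right_vertices C) v))"
  proof (rule prod.reindex_bij_betw, rule bij_betw_nth_positions)
    show "distinct ?xs" by simp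
    show "left_vertices C \<subseteq> set ?xs" using finite_lin_vertices unfolding lin_vertices_eq by auto
  qed
  finally show ?thesis .
qed

end

theorem theorem4p9:
  fixes n :: nat and \<pi>0 :: "nat list set" and x y :: "'a::comm_ring_1"
  assumes "n \<ge> 1"
    and "linked_cycle n \<pi>0"
  defines "L \<equiv> vertex_labeling n \<pi>0"
  shows "(\<Sum>\<pi> \<in> LC n L. x ^ cr2 \<pi> * y ^ ne2 \<pi>) = (\<Sum>\<pi> \<in> LC n L. x ^ ne2 \<pi> * y ^ cr2 \<pi>)
       \<and> (\<Sum>\<pi> \<in> LC n L. x ^ ne2 \<pi> * y ^ cr2 \<pi>)
           = (\<Prod>p \<in> {p. p < length L \<and> is_left_end (L ! p)}. hpoly (hval L p) x y)"
proof -
  interpret is_linked_cycle n \<pi>0 by (rule is_linked_cycle.intro) fact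
  define A where "A = left_vertices \<pi>0"
  define B where "B = right_vertices \<pi>0"
  have "finite A" "finite B"
    using finite_lin_vertices unfolding A_def B_def lin_vertices_eq by simp_all
  moreover have "card A = card B"
    using arc_matchings_card_eq[OF lin_arcs_in_arc_matchings] unfolding A_def B_def .
  ultimately have gf: "(\<Sum>\<pi>\<in>LC n L. u ^ cr2 \<pi> * v ^ ne2 \<pi>) = (\<Prod>a\<in>A. hpoly (height A B a) u v)"
    for u v :: 'a
    unfolding L_def cr2_eq_crossings ne2_eq_nestings
    using sum.reindex_bij_betw[OF bij_betw_lin_arcs_LC, of "\<lambda>M. u ^ crossings M * v ^ nestings M"]
      arc_matchings_generating_function[of A B u v]
    by (simp add: A_def B_def)
  have "(\<Sum>\<pi>\<in>LC n L. x ^ ne2 \<pi> * y ^ cr2 \<pi>) = (\<Sum>\<pi>\<in>LC n L. y ^ cr2 \<pi> * x ^ ne2 \<pi>)"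
    by (simp add: mult.commute)
  also have "\<dots> = (\<Prod>a\<in>A. hpoly (height A B a) y x)" by (rule gf)
  also have "\<dots> = (\<Prod>a\<in>A. hpoly (height A B a) x y)" by (intro prod.cong refl hpoly_commute)
  finally have swapped: "(\<Sum>\<pi>\<in>LC n L. x ^ ne2 \<pi> * y ^ cr2 \<pi>) = (\<Prod>a\<in>A. hpoly (height A B a) x y)" .
  show ?thesis
    using gf[of x y] swapped prod_left_end_positions[of "\<lambda>h. hpoly h x y"]
    unfolding L_def A_def B_def by simp
qed

end
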